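(* Let $G=(V,E)$ be an undirected graph on $n$ vertices with integral edge weights (capacities) in $[0,W]$, and let $s,t\in V$. Then every non-circular $s$-$t$ flow of value $f$ in $G$ satisfies $\sum_{e\in E} |\phi(e)| = O(n\sqrt{fW})$, where $\phi(e)$ is the amount of flow carried by edge $e$ and the implied constant is absolute.
   Context: An $s$-$t$ flow assigns to each edge a direction and an amount of flow not exceeding its weight, with flow conservation at every vertex other than $s,t$; its value $f$ is the net flow leaving $s$. The flow is non-circular if there is no directed cycle of edges each carrying positive flow. *)

theory Defs
  imports Main "HOL-Library.Multiset" Complex_Main
begin

text \<open>Undirected weighted graph on a finite vertex set V: a symmetric integer weight
  function c; the edge {u,v} (u \<noteq> v) is present with weight c u v (weight 0 = absent,
  which is harmless for flows since an edge of weight 0 carries no flow).\<close>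
definition weighted_graph :: "'a set \<Rightarrow> ('a \<Rightarrow> 'a \<Rightarrow> int) \<Rightarrow> int \<Rightarrow> bool" where
  "weighted_graph V c W \<longleftrightarrow> finite V \<and>
     (\<forall>u v. c u v = c v u) \<and> (\<forall>u v. 0 \<le> c u v \<and> c u v \<le> W)"

text \<open>An s-t flow: phi u v is the signed flow along edge {u,v} in direction u to v;
  skew-symmetry encodes the choice of direction, the amount is bounded by the weight,
  and flow is conserved at every vertex other than s and t.\<close>
definition st_flow :: "'a set \<Rightarrow> ('a \<Rightarrow> 'a \<Rightarrow> int) \<Rightarrow> 'a \<Rightarrow> 'a \<Rightarrow> ('a \<Rightarrow> 'a \<Rightarrow> real) \<Rightarrow> bool" where
  "st_flow V c s t phi \<longleftrightarrow>
     (\<forall>u v. phi u v = - phi v u) \<and>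
     (\<forall>u\<in>V. \<forall>v\<in>V. \<bar>phi u v\<bar> \<le> real_of_int (c u v)) \<and>
     (\<forall>v\<in>V - {s, t}. (\<Sum>u\<in>V. phi v u) = 0)"

definition flow_value :: "'a set \<Rightarrow> 'a \<Rightarrow> ('a \<Rightarrow> 'a \<Rightarrow> real) \<Rightarrow> real" where
  "flow_value V s phi = (\<Sum>u\<in>V. phi s u)"

definition non_circular :: "'a set \<Rightarrow> ('a \<Rightarrow> 'a \<Rightarrow> real) \<Rightarrow> bool" where
  "non_circular V phi \<longleftrightarrow> acyclic {(u, v). u \<in> V \<and> v \<in> V \<and> phi u v > 0}"

text \<open>Sum over undirected edges of the amount of flow: each unordered pair counted once.\<close>
definition total_flow :: "'a set \<Rightarrow> ('a \<Rightarrow> 'a \<Rightarrow> real) \<Rightarrow> real" where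
  "total_flow V phi = (\<Sum>u\<in>V. \<Sum>v\<in>V. \<bar>phi u v\<bar>) / 2"

end

theory Submission
  imports Defs
begin

text \<open>Number the vertices 0, ..., n-1 along a topological order of the acyclic graph of
  positive flow. Every threshold cut of this order is crossed only forwards, so it carries at
  most f units; summing over the n thresholds, the flow weighted by the span of its edge is at
  most n f. An edge of span at most L carries at most W, and from each vertex there are at most
  L such edges; an edge of larger span carries at most (its weighted flow) / L. Hence the total
  flow is at most n (W L + f / L), which is 2 n sqrt (f W) for L = sqrt (f / W).\<close>

lemma acyclic_topological_numbering:
  assumes "finite A" "acyclic R"
  shows "\<exists>\<pi>::'a \<Rightarrow> nat. inj_on \<pi> A \<and> (\<forall>x\<in>A. \<pi> x < card A) \<and>
          (\<forall>u\<in>A. \<forall>v\<in>A. (u, v) \<in> R \<longrightarrow> \<pi> u < \<pi> v)"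
  using assms(1)
proof (induction A rule: finite_remove_induct)
  case empty
  then show ?case by simp
next
  case (remove A)
  have "wf (R \<inter> A \<times> A)"
    using remove.hyps(1) acyclic_subset[OF assms(2)] by (intro finite_acyclic_wf) auto
  then obtain m where m: "m \<in> A" "\<forall>y\<in>A. (y, m) \<notin> R"
    using remove.hyps(2) unfolding wf_eq_minimal by (metis IntI mem_Sigma_iff ex_in_conv)
  obtain \<pi>' where IH: "inj_on \<pi>' (A - {m})" "\<forall>x\<in>A - {m}. \<pi>' x < card (A - {m})"
      "\<forall>u\<in>A - {m}. \<forall>v\<in>A - {m}. (u, v) \<in> R \<longrightarrow> \<pi>' u < \<pi>' v"
    using remove.IH[OF m(1)] by blast
  define \<pi> where "\<pi> x = (if x = m then 0 else Suc (\<pi>' x))" for x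
  have "\<pi> x < card A" if "x \<in> A" for x
  proof (cases "x = m")
    case False
    then have "\<pi>' x < card (A - {m})" using IH(2) that by blast
    then show ?thesis using False m(1) remove.hyps(1) by (simp add: \<pi>_def)
  qed (use that remove.hyps(1) in \<open>auto simp: \<pi>_def card_gt_0_iff\<close>)
  moreover have "inj_on \<pi> A"
    using IH(1) unfolding \<pi>_def inj_on_def by auto
  moreover have "\<forall>u\<in>A. \<forall>v\<in>A. (u, v) \<in> R \<longrightarrow> \<pi> u < \<pi> v"
    using m(2) IH(3) unfolding \<pi>_def by fastforce
  ultimately show ?case by blast
qed

lemma skew_double_sum_eq_0:
  fixes phi :: "'a \<Rightarrow> 'a \<Rightarrow> real"
  assumes "\<forall>u v. phi u v = - phi v u"
  shows "(\<Sum>u\<in>S. \<Sum>v\<in>S. phi u v) = 0"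
proof -
  have "(\<Sum>u\<in>S. \<Sum>v\<in>S. phi u v) = (\<Sum>v\<in>S. \<Sum>u\<in>S. phi u v)"
    by (rule sum.swap)
  also have "\<dots> = - (\<Sum>v\<in>S. \<Sum>u\<in>S. phi v u)"
    unfolding sum_negf[symmetric] using assms by (intro sum.cong refl) blast
  finally show ?thesis by simp
qed

lemma net_flow_out_of_subset_le_value:
  fixes phi :: "'a \<Rightarrow> 'a \<Rightarrow> real"
  assumes fin: "finite V" and skew: "\<forall>u v. phi u v = - phi v u"
    and cons: "\<forall>v\<in>V - {s, t}. (\<Sum>u\<in>V. phi v u) = 0"
    and "s \<in> V" "t \<in> V" and SV: "S \<subseteq> V"
  shows "(\<Sum>u\<in>S. \<Sum>v\<in>V - S. phi u v) \<le> \<bar>\<Sum>u\<in>V. phi s u\<bar>"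
proof -
  define out where "out u = (\<Sum>v\<in>V. phi u v)" for u
  have fS: "finite S" using fin SV by (rule finite_subset[rotated])
  have out_sum: "(\<Sum>u\<in>X. out u) = (if s \<in> X then out s else 0) + (if t \<in> X \<and> t \<noteq> s then out t else 0)"
    if "X \<subseteq> V" for X
  proof -
    have "(\<Sum>u\<in>X. out u)
        = (\<Sum>u\<in>X. (if u = s then out s else 0) + (if u = t \<and> t \<noteq> s then out t else 0))"
      using that cons unfolding out_def by (intro sum.cong) auto
    then show ?thesis
      using finite_subset[OF that fin] by (cases "t = s") (simp_all add: sum.distrib)
  qed
  have "(\<Sum>u\<in>S. out u) = (\<Sum>u\<in>S. \<Sum>v\<in>S. phi u v) + (\<Sum>u\<in>S. \<Sum>v\<in>V - S. phi u v)"
    unfolding out_def sum.distrib[symmetric]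
    using fS fin SV by (intro sum.cong refl) (metis Diff_partition finite_Diff sum.union_disjoint Diff_disjoint)
  then have crossing: "(\<Sum>u\<in>S. \<Sum>v\<in>V - S. phi u v) = (\<Sum>u\<in>S. out u)"
    using skew_double_sum_eq_0[OF skew] by simp
  have "(\<Sum>u\<in>V. out u) = 0"
    unfolding out_def using skew_double_sum_eq_0[OF skew] .
  then have "(if t \<noteq> s then out t else 0) = - out s"
    using out_sum[OF subset_refl] \<open>s \<in> V\<close> \<open>t \<in> V\<close> by simp
  then have "(\<Sum>u\<in>S. out u) \<le> \<bar>out s\<bar>"
    using out_sum[OF SV] by (cases "s = t"; cases "s \<in> S"; cases "t \<in> S") auto
  then show ?thesis unfolding crossing out_def .
qed

lemma forward_cut_flow_le_value:
  fixes phi :: "'a \<Rightarrow> 'a \<Rightarrow> real" and \<pi> :: "'a \<Rightarrow> nat"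
  assumes fin: "finite V" and skew: "\<forall>u v. phi u v = - phi v u"
    and cons: "\<forall>v\<in>V - {s, t}. (\<Sum>u\<in>V. phi v u) = 0"
    and "s \<in> V" "t \<in> V"
    and forward: "\<forall>u\<in>V. \<forall>v\<in>V. phi u v > 0 \<longrightarrow> \<pi> u < \<pi> v"
  shows "(\<Sum>u\<in>V. \<Sum>v\<in>V. if \<pi> u < k \<and> k \<le> \<pi> v then \<bar>phi u v\<bar> else 0)
          \<le> \<bar>\<Sum>u\<in>V. phi s u\<bar>"
proof -
  define S where "S = {u\<in>V. \<pi> u < k}"
  have crossing_nonneg: "phi u v \<ge> 0" if "u \<in> S" "v \<in> V - S" for u v
  proof -
    have "\<not> \<pi> v < \<pi> u" using that unfolding S_def by auto
    then have "\<not> phi v u > 0" using forward that unfolding S_def by blast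
    then show ?thesis using skew[rule_format, of u v] by linarith
  qed
  have VS: "V - S = {v\<in>V. k \<le> \<pi> v}" unfolding S_def by auto
  have "(\<Sum>v\<in>V. if \<pi> u < k \<and> k \<le> \<pi> v then \<bar>phi u v\<bar> else 0)
      = (if \<pi> u < k then \<Sum>v\<in>V - S. \<bar>phi u v\<bar> else 0)" for u
    using fin unfolding VS by (simp add: sum.inter_filter)
  then have "(\<Sum>u\<in>V. \<Sum>v\<in>V. if \<pi> u < k \<and> k \<le> \<pi> v then \<bar>phi u v\<bar> else 0)
      = (\<Sum>u\<in>S. \<Sum>v\<in>V - S. \<bar>phi u v\<bar>)"
    using fin unfolding S_def by (simp add: sum.inter_filter)
  also have "\<dots> = (\<Sum>u\<in>S. \<Sum>v\<in>V - S. phi u v)"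
    using crossing_nonneg by (intro sum.cong refl) simp
  also have "\<dots> \<le> \<bar>\<Sum>u\<in>V. phi s u\<bar>"
    by (rule net_flow_out_of_subset_le_value[OF fin skew cons \<open>s \<in> V\<close> \<open>t \<in> V\<close>])
      (auto simp: S_def)
  finally show ?thesis .
qed

lemma forward_span_weight_le:
  fixes a :: "'a \<Rightarrow> 'a \<Rightarrow> real" and \<pi> :: "'a \<Rightarrow> nat"
  assumes fin: "finite V" and numbering_lt: "\<forall>x\<in>V. \<pi> x < n"
    and cut: "\<And>k. (\<Sum>u\<in>V. \<Sum>v\<in>V. if \<pi> u < k \<and> k \<le> \<pi> v then a u v else 0) \<le> F"
  shows "(\<Sum>u\<in>V. \<Sum>v\<in>V. if \<pi> u < \<pi> v then a u v * real (\<pi> v - \<pi> u) else 0) \<le> real n * F"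
proof -
  have span: "(if \<pi> u < \<pi> v then a u v * real (\<pi> v - \<pi> u) else 0)
      = (\<Sum>k<n. if \<pi> u < k \<and> k \<le> \<pi> v then a u v else 0)" if "v \<in> V" for u v
  proof -
    have "{k\<in>{..<n}. \<pi> u < k \<and> k \<le> \<pi> v} = {\<pi> u<..\<pi> v}"
      using numbering_lt that by auto
    then have "(\<Sum>k<n. if \<pi> u < k \<and> k \<le> \<pi> v then a u v else 0) = a u v * real (\<pi> v - \<pi> u)"
      by (simp flip: sum.inter_filter)
    then show ?thesis by simp
  qed
  have "(\<Sum>u\<in>V. \<Sum>v\<in>V. if \<pi> u < \<pi> v then a u v * real (\<pi> v - \<pi> u) else 0)
      = (\<Sum>u\<in>V. \<Sum>v\<in>V. \<Sum>k<n. if \<pi> u < k \<and> k \<le> \<pi> v then a u v else 0)"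
    using span by (intro sum.cong refl) blast
  also have "\<dots> = (\<Sum>k<n. \<Sum>u\<in>V. \<Sum>v\<in>V. if \<pi> u < k \<and> k \<le> \<pi> v then a u v else 0)"
    by (subst sum.swap) (intro sum.cong refl sum.swap)
  also have "\<dots> \<le> (\<Sum>k<n. F)"
    by (intro sum_mono cut)
  finally show ?thesis by simp
qed

lemma card_short_forward_le:
  fixes \<pi> :: "'a \<Rightarrow> nat" and L :: real
  assumes inj: "inj_on \<pi> V" and "0 \<le> L"
  shows "real (card {v\<in>V. \<pi> u < \<pi> v \<and> real (\<pi> v - \<pi> u) \<le> L}) \<le> L"
proof -
  define B where "B = {v\<in>V. \<pi> u < \<pi> v \<and> real (\<pi> v - \<pi> u) \<le> L}"
  have image: "\<pi> ` B \<subseteq> {\<pi> u<..\<pi> u + nat \<lfloor>L\<rfloor>}"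
  proof
    fix y assume "y \<in> \<pi> ` B"
    then obtain v where "y = \<pi> v" "\<pi> u < \<pi> v" "real (\<pi> v - \<pi> u) \<le> L"
      unfolding B_def by blast
    moreover from this have "int (\<pi> v - \<pi> u) \<le> \<lfloor>L\<rfloor>"
      by (simp add: le_floor_iff)
    ultimately show "y \<in> {\<pi> u<..\<pi> u + nat \<lfloor>L\<rfloor>}" by auto
  qed
  have "inj_on \<pi> B"
    using inj unfolding B_def by (rule inj_on_subset) auto
  then have "card B \<le> nat \<lfloor>L\<rfloor>"
    using card_inj_on_le[OF _ image] by simp
  then show ?thesis
    unfolding B_def using \<open>0 \<le> L\<close> by linarith
qed

lemma forward_weight_le_threshold:
  fixes a :: "'a \<Rightarrow> 'a \<Rightarrow> real" and \<pi> :: "'a \<Rightarrow> nat" and L :: real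
  assumes fin: "finite V" and inj: "inj_on \<pi> V"
    and nonneg: "\<forall>u\<in>V. \<forall>v\<in>V. 0 \<le> a u v" and bounded: "\<forall>u\<in>V. \<forall>v\<in>V. a u v \<le> W"
    and "0 \<le> W" and "0 < L"
  shows "(\<Sum>u\<in>V. \<Sum>v\<in>V. if \<pi> u < \<pi> v then a u v else 0)
    \<le> real (card V) * W * L
       + (\<Sum>u\<in>V. \<Sum>v\<in>V. if \<pi> u < \<pi> v then a u v * real (\<pi> v - \<pi> u) else 0) / L"
proof -
  define short where "short u v \<longleftrightarrow> \<pi> u < \<pi> v \<and> real (\<pi> v - \<pi> u) \<le> L" for u v
  have split: "(if \<pi> u < \<pi> v then a u v else 0)
      \<le> (if short u v then W else 0) + (if \<pi> u < \<pi> v then a u v * real (\<pi> v - \<pi> u) else 0) / L"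
    if "u \<in> V" "v \<in> V" for u v
  proof (cases "short u v")
    case True
    have "0 \<le> a u v * real (\<pi> v - \<pi> u) / L" and "a u v \<le> W"
      using that nonneg bounded \<open>0 < L\<close> by simp_all
    then show ?thesis
      using True unfolding short_def by auto
  next
    case False
    have "\<pi> u < \<pi> v \<Longrightarrow> a u v * L \<le> a u v * real (\<pi> v - \<pi> u)"
      using False that nonneg by (intro mult_left_mono) (auto simp: short_def)
    then show ?thesis
      using False \<open>0 < L\<close> by (auto simp: field_simps)
  qed
  have short_row: "(\<Sum>v\<in>V. if short u v then W else 0) \<le> W * L" for u
  proof -
    have "(\<Sum>v\<in>V. if short u v then W else 0) = W * real (card {v\<in>V. short u v})"
      using fin by (simp flip: sum.inter_filter)
    also have "\<dots> \<le> W * L"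
      using card_short_forward_le[OF inj less_imp_le[OF \<open>0 < L\<close>], of u] \<open>0 \<le> W\<close>
      unfolding short_def by (intro mult_left_mono) auto
    finally show ?thesis .
  qed
  have "(\<Sum>u\<in>V. \<Sum>v\<in>V. if \<pi> u < \<pi> v then a u v else 0)
      \<le> (\<Sum>u\<in>V. \<Sum>v\<in>V. (if short u v then W else 0)
           + (if \<pi> u < \<pi> v then a u v * real (\<pi> v - \<pi> u) else 0) / L)"
    using split by (intro sum_mono) blast
  also have "\<dots> = (\<Sum>u\<in>V. \<Sum>v\<in>V. if short u v then W else 0)
      + (\<Sum>u\<in>V. \<Sum>v\<in>V. if \<pi> u < \<pi> v then a u v * real (\<pi> v - \<pi> u) else 0) / L"
    by (simp add: sum.distrib sum_divide_distrib)
  also have "(\<Sum>u\<in>V. \<Sum>v\<in>V. if short u v then W else 0) \<le> real (card V) * W * L"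
    using sum_mono[of V "\<lambda>u. \<Sum>v\<in>V. if short u v then W else 0" "\<lambda>_. W * L", OF short_row]
    by simp
  finally show ?thesis by simp
qed

lemma forward_weight_le:
  fixes a :: "'a \<Rightarrow> 'a \<Rightarrow> real" and \<pi> :: "'a \<Rightarrow> nat"
  assumes fin: "finite V" and inj: "inj_on \<pi> V" and numbering_lt: "\<forall>x\<in>V. \<pi> x < card V"
    and nonneg: "\<forall>u\<in>V. \<forall>v\<in>V. 0 \<le> a u v" and bounded: "\<forall>u\<in>V. \<forall>v\<in>V. a u v \<le> W"
    and "0 \<le> W"
    and cut: "\<And>k. (\<Sum>u\<in>V. \<Sum>v\<in>V. if \<pi> u < k \<and> k \<le> \<pi> v then a u v else 0) \<le> F"
  shows "(\<Sum>u\<in>V. \<Sum>v\<in>V. if \<pi> u < \<pi> v then a u v else 0) \<le> 2 * real (card V) * sqrt (F * W)"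
proof -
  define n where "n = real (card V)"
  define T where "T = (\<Sum>u\<in>V. \<Sum>v\<in>V. if \<pi> u < \<pi> v then a u v else 0)"
  define S where "S = (\<Sum>u\<in>V. \<Sum>v\<in>V. if \<pi> u < \<pi> v then a u v * real (\<pi> v - \<pi> u) else 0)"
  have "0 \<le> F" using cut[of 0] by simp
  have "S \<le> n * F"
    unfolding S_def n_def using forward_span_weight_le[OF fin numbering_lt cut] .
  show ?thesis
  proof (cases "F = 0 \<or> W = 0")
    case True
    have "a u v \<le> a u v * real (\<pi> v - \<pi> u)" if "u \<in> V" "v \<in> V" "\<pi> u < \<pi> v" for u v
      using mult_left_mono[of 1 "real (\<pi> v - \<pi> u)" "a u v"] nonneg that by simp
    then have "T \<le> S"
      unfolding T_def S_def by (intro sum_mono) auto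
    moreover have "T \<le> 0" if "W = 0"
      unfolding T_def using bounded that by (intro sum_nonpos) auto
    ultimately have "T \<le> 0"
      using True \<open>S \<le> n * F\<close> by auto
    moreover have "0 \<le> 2 * n * sqrt (F * W)"
      using \<open>0 \<le> F\<close> \<open>0 \<le> W\<close> unfolding n_def by simp
    ultimately show ?thesis
      unfolding T_def n_def by linarith
  next
    case False
    then have "0 < F" "0 < W" using \<open>0 \<le> F\<close> \<open>0 \<le> W\<close> by auto
    define L where "L = sqrt (F / W)"
    have "0 < L" unfolding L_def using \<open>0 < F\<close> \<open>0 < W\<close> by simp
    have WL: "W * L = sqrt (F * W)"
    proof -
      have "sqrt (F * W) = sqrt ((F / W) * (W * W))" using \<open>0 < W\<close> by simp
      then show ?thesis unfolding L_def real_sqrt_mult using \<open>0 < W\<close> by simp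
    qed
    have FL: "F / L = sqrt (F * W)"
    proof -
      have "sqrt (F * W) * L = sqrt (F * F)"
        unfolding L_def real_sqrt_mult[symmetric] using \<open>0 < W\<close> by simp
      then show ?thesis using \<open>0 < F\<close> \<open>0 < L\<close> by (simp add: field_simps)
    qed
    have "T \<le> n * W * L + S / L"
      unfolding T_def S_def n_def
      using forward_weight_le_threshold[OF fin inj nonneg bounded \<open>0 \<le> W\<close> \<open>0 < L\<close>] .
    also have "\<dots> \<le> n * (W * L) + n * (F / L)"
      using divide_right_mono[OF \<open>S \<le> n * F\<close>, of L] \<open>0 < L\<close> by simp
    also have "\<dots> = 2 * n * sqrt (F * W)"
      unfolding WL FL by simp
    finally show ?thesis
      unfolding T_def n_def .
  qed
qed

lemma sum_abs_skew_eq_twice_forward: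
  fixes phi :: "'a \<Rightarrow> 'a \<Rightarrow> real" and \<pi> :: "'a \<Rightarrow> nat"
  assumes skew: "\<forall>u v. phi u v = - phi v u" and inj: "inj_on \<pi> V"
  shows "(\<Sum>u\<in>V. \<Sum>v\<in>V. \<bar>phi u v\<bar>) = 2 * (\<Sum>u\<in>V. \<Sum>v\<in>V. if \<pi> u < \<pi> v then \<bar>phi u v\<bar> else 0)"
proof -
  have abs_sym: "\<bar>phi u v\<bar> = \<bar>phi v u\<bar>" for u v
    using skew by (metis abs_minus_cancel)
  have split: "\<bar>phi u v\<bar> = (if \<pi> u < \<pi> v then \<bar>phi u v\<bar> else 0) + (if \<pi> v < \<pi> u then \<bar>phi v u\<bar> else 0)"
    if "u \<in> V" "v \<in> V" for u v
  proof (cases "u = v")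
    case True
    then show ?thesis using skew[rule_format, of u u] by simp
  next
    case False
    then have "\<pi> u \<noteq> \<pi> v" using inj that by (auto dest: inj_onD)
    then show ?thesis using abs_sym[of u v] by auto
  qed
  have "(\<Sum>u\<in>V. \<Sum>v\<in>V. \<bar>phi u v\<bar>)
      = (\<Sum>u\<in>V. \<Sum>v\<in>V. if \<pi> u < \<pi> v then \<bar>phi u v\<bar> else 0)
        + (\<Sum>u\<in>V. \<Sum>v\<in>V. if \<pi> v < \<pi> u then \<bar>phi v u\<bar> else 0)"
    unfolding sum.distrib[symmetric] using split by (intro sum.cong refl) blast
  also have "(\<Sum>u\<in>V. \<Sum>v\<in>V. if \<pi> v < \<pi> u then \<bar>phi v u\<bar> else 0)
      = (\<Sum>u\<in>V. \<Sum>v\<in>V. if \<pi> u < \<pi> v then \<bar>phi u v\<bar> else 0)"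
    by (rule sum.swap)
  finally show ?thesis by simp
qed

theorem mainTheorem12:
  shows "\<exists>C::real. \<forall>(V::nat set) c W s t phi.
     weighted_graph V c W \<and> s \<in> V \<and> t \<in> V \<and> st_flow V c s t phi \<and> non_circular V phi
     \<longrightarrow> total_flow V phi \<le> C * real (card V) * sqrt (\<bar>flow_value V s phi\<bar> * real_of_int W)"
proof (intro exI[of _ 2] allI impI)
  fix V :: "nat set" and c W s t phi
  assume "weighted_graph V c W \<and> s \<in> V \<and> t \<in> V \<and> st_flow V c s t phi \<and> non_circular V phi"
  then have fin: "finite V" and weights: "\<forall>u v. 0 \<le> c u v \<and> c u v \<le> W"
    and "s \<in> V" "t \<in> V" and skew: "\<forall>u v. phi u v = - phi v u"
    and capacity: "\<forall>u\<in>V. \<forall>v\<in>V. \<bar>phi u v\<bar> \<le> real_of_int (c u v)"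
    and cons: "\<forall>v\<in>V - {s, t}. (\<Sum>u\<in>V. phi v u) = 0"
    and acyclic: "acyclic {(u, v). u \<in> V \<and> v \<in> V \<and> phi u v > 0}"
    unfolding weighted_graph_def st_flow_def non_circular_def by blast+
  obtain \<pi> :: "nat \<Rightarrow> nat" where inj: "inj_on \<pi> V" and numbering_lt: "\<forall>x\<in>V. \<pi> x < card V"
    and forward: "\<forall>u\<in>V. \<forall>v\<in>V. phi u v > 0 \<longrightarrow> \<pi> u < \<pi> v"
    using acyclic_topological_numbering[OF fin acyclic] by auto
  have bounded: "\<forall>u\<in>V. \<forall>v\<in>V. \<bar>phi u v\<bar> \<le> real_of_int W"
    using capacity weights by (meson of_int_le_iff order.trans)
  have "0 \<le> real_of_int W" using weights by (meson of_int_0_le_iff order.trans)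
  have "(\<Sum>u\<in>V. \<Sum>v\<in>V. if \<pi> u < \<pi> v then \<bar>phi u v\<bar> else 0)
      \<le> 2 * real (card V) * sqrt (\<bar>\<Sum>u\<in>V. phi s u\<bar> * real_of_int W)"
    using forward_weight_le[OF fin inj numbering_lt _ bounded \<open>0 \<le> real_of_int W\<close>
        forward_cut_flow_le_value[OF fin skew cons \<open>s \<in> V\<close> \<open>t \<in> V\<close> forward]]
    by simp
  then show "total_flow V phi \<le> 2 * real (card V) * sqrt (\<bar>flow_value V s phi\<bar> * real_of_int W)"
    unfolding total_flow_def flow_value_def sum_abs_skew_eq_twice_forward[OF skew inj] by simp
qed

end
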